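(* Let $A$ be a commutative ring. Then $\mathrm{GL}_2(A)$ acts transitively on the set of ordered $3$-cliques of $\Gamma(A)$, and the stabilizer of the ordered $3$-clique $(\infty,0,1)$ is the group of scalar matrices in $\mathrm{GL}_2(A)$.
   Context: A unimodular row over $A$ is $(a,b)\in A^2$ with $aA+bA=A$. $\Gamma(A)$ is the graph whose vertices are classes $[u]$ of unimodular rows modulo multiplication by units, with $\{[u],[v]\}$ an edge iff the matrix with rows $u,v$ lies in $\mathrm{GL}_2(A)$. An ordered $3$-clique is a triple of pairwise adjacent vertices. $\mathrm{GL}_2(A)$ acts on vertices on the right by $[u]\cdot M=[uM]$. $\infty=[(1,0)]$, $0=[(0,1)]$, $1=[(1,1)]$. *)

theory Defs
  imports Main
begin

type_synonym 'a row = "'a \<times> 'a"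
type_synonym 'a mat2 = "'a row \<times> 'a row"

definition is_unit :: "'a::comm_ring_1 \<Rightarrow> bool" where
  "is_unit c \<longleftrightarrow> c dvd 1"

definition unimodular :: "'a::comm_ring_1 row \<Rightarrow> bool" where
  "unimodular u \<longleftrightarrow> (\<exists>x y. fst u * x + snd u * y = 1)"

definition det2 :: "'a::comm_ring_1 mat2 \<Rightarrow> 'a" where
  "det2 M = fst (fst M) * snd (snd M) - snd (fst M) * fst (snd M)"

definition GL2 :: "'a::comm_ring_1 mat2 set" where
  "GL2 = {M. is_unit (det2 M)}"

definition row_mult :: "'a::comm_ring_1 row \<Rightarrow> 'a mat2 \<Rightarrow> 'a row" where
  "row_mult u M = (fst u * fst (fst M) + snd u * fst (snd M),
                   fst u * snd (fst M) + snd u * snd (snd M))"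

definition cls :: "'a::comm_ring_1 row \<Rightarrow> 'a row set" where
  "cls u = {(c * fst u, c * snd u) | c. is_unit c}"

definition vertices :: "'a::comm_ring_1 row set set" where
  "vertices = {cls u | u. unimodular u}"

definition adj :: "'a::comm_ring_1 row set \<Rightarrow> 'a row set \<Rightarrow> bool" where
  "adj X Y \<longleftrightarrow> (\<exists>u v. unimodular u \<and> unimodular v \<and> X = cls u \<and> Y = cls v \<and> (u, v) \<in> GL2)"

definition cliques3 :: "('a::comm_ring_1 row set \<times> 'a row set \<times> 'a row set) set" where
  "cliques3 = {(X, Y, Z). X \<in> vertices \<and> Y \<in> vertices \<and> Z \<in> vertices \<and>
                           adj X Y \<and> adj Y Z \<and> adj X Z}"

definition vact :: "'a::comm_ring_1 row set \<Rightarrow> 'a mat2 \<Rightarrow> 'a row set" where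
  "vact X M = (\<lambda>u. row_mult u M) ` X"

definition cact :: "('a::comm_ring_1 row set \<times> 'a row set \<times> 'a row set) \<Rightarrow> 'a mat2
                    \<Rightarrow> ('a row set \<times> 'a row set \<times> 'a row set)" where
  "cact T M = (case T of (X, Y, Z) \<Rightarrow> (vact X M, vact Y M, vact Z M))"

definition v_inf :: "'a::comm_ring_1 row set" where "v_inf = cls (1, 0)"
definition v_zero :: "'a::comm_ring_1 row set" where "v_zero = cls (0, 1)"
definition v_one :: "'a::comm_ring_1 row set" where "v_one = cls (1, 1)"

definition scalar_mats :: "'a::comm_ring_1 mat2 set" where
  "scalar_mats = {((c, 0), (0, c)) | c. is_unit c}"

end

theory Submission
  imports Defs
begin

text \<open>If \<open>([u], [v], [w])\<close> is a 3-clique then \<open>det(u,v)\<close>, \<open>det(u,w)\<close> and \<open>det(v,w)\<close> are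
  units, and Cramer's rule writes \<open>w = \<alpha> u + \<beta> v\<close> with unit coefficients
  \<open>\<alpha> = -det(v,w)/det(u,v)\<close>, \<open>\<beta> = det(u,w)/det(u,v)\<close>. The matrix with rows \<open>\<alpha> u\<close> and
  \<open>\<beta> v\<close> is then invertible and maps \<open>(\<infinity>, 0, 1)\<close> to the given clique, so every clique lies in
  the orbit of \<open>(\<infinity>, 0, 1)\<close>. A matrix fixing \<open>(\<infinity>, 0, 1)\<close> has rows \<open>(a, 0)\<close>, \<open>(0, d)\<close> with
  \<open>(a, d)\<close> proportional to \<open>(1, 1)\<close>, hence is scalar.\<close>

lemma is_unit_iff_dvd_one [simp]: "is_unit c \<longleftrightarrow> c dvd (1::'a::comm_ring_1)"
  by (simp add: is_unit_def)

lemma dvd_one_mult: "a dvd 1 \<Longrightarrow> b dvd 1 \<Longrightarrow> a * b dvd (1::'a::comm_monoid_mult)"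
  by (metis mult_dvd_mono mult_1_right)

definition mat_mult :: "'a::comm_ring_1 mat2 \<Rightarrow> 'a mat2 \<Rightarrow> 'a mat2" where
  "mat_mult M N = (row_mult (fst M) N, row_mult (snd M) N)"

definition mat_one :: "'a::comm_ring_1 mat2" where
  "mat_one = ((1, 0), (0, 1))"

lemma row_mult_mat_mult: "row_mult (row_mult u M) N = row_mult u (mat_mult M N)"
  by (cases u; cases M; cases N) (auto simp: row_mult_def mat_mult_def algebra_simps)

lemma row_mult_mat_one [simp]: "row_mult u mat_one = u"
  by (cases u) (simp add: row_mult_def mat_one_def)

lemma det2_mat_mult: "det2 (mat_mult M N) = det2 M * det2 N"
  by (cases M; cases N) (auto simp: det2_def mat_mult_def row_mult_def algebra_simps)

lemma GL2_mat_mult: "M \<in> GL2 \<Longrightarrow> N \<in> GL2 \<Longrightarrow> mat_mult M N \<in> GL2"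
  by (simp add: GL2_def det2_mat_mult dvd_one_mult)

lemma GL2_right_inverse:
  assumes "M \<in> GL2"
  shows "\<exists>N\<in>GL2. mat_mult M N = mat_one"
proof -
  obtain a b c d where M: "M = ((a, b), (c, d))"
    by (metis prod.collapse)
  from assms obtain e where e: "(a * d - b * c) * e = 1"
    by (auto simp: GL2_def M det2_def)
  define N where "N = ((d * e, - b * e), (- c * e, a * e))"
  have "det2 N = e * ((a * d - b * c) * e)"
    by (simp add: N_def det2_def algebra_simps)
  also have "\<dots> = e"
    using e by simp
  finally have "N \<in> GL2"
    using e by (simp add: GL2_def) (metis dvdI mult.commute)
  moreover have "mat_mult M N = mat_one"
    using e by (simp add: M N_def mat_mult_def mat_one_def row_mult_def algebra_simps)
  ultimately show ?thesis by blast
qed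

lemma vact_mat_mult: "vact (vact X M) N = vact X (mat_mult M N)"
  by (simp add: vact_def image_image row_mult_mat_mult)

lemma cact_mat_mult: "cact (cact T M) N = cact T (mat_mult M N)"
  by (cases T) (simp add: cact_def vact_mat_mult)

lemma cact_mat_one [simp]: "cact T mat_one = T"
  by (cases T) (simp add: cact_def vact_def)

definition row_scale :: "'a::comm_ring_1 \<Rightarrow> 'a row \<Rightarrow> 'a row" where
  "row_scale c u = (c * fst u, c * snd u)"

lemma row_scale_row_scale: "row_scale c (row_scale d u) = row_scale (c * d) u"
  by (simp add: row_scale_def mult.assoc)

lemma row_scale_one [simp]: "row_scale 1 u = u"
  by (simp add: row_scale_def)

lemma cls_eq_image_row_scale: "cls u = (\<lambda>c. row_scale c u) ` {c. c dvd 1}"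
  by (auto simp: cls_def row_scale_def)

lemma row_mult_row_scale: "row_mult (row_scale c u) M = row_scale c (row_mult u M)"
  by (simp add: row_mult_def row_scale_def algebra_simps)

lemma det2_row_scale: "det2 (row_scale c u, row_scale d v) = c * d * det2 (u, v)"
  by (simp add: det2_def row_scale_def algebra_simps)

lemma vact_cls: "vact (cls u) M = cls (row_mult u M)"
  by (simp add: vact_def cls_eq_image_row_scale image_image row_mult_row_scale)

lemma mem_cls_self: "u \<in> cls u"
  unfolding cls_eq_image_row_scale by (rule image_eqI[of _ _ 1]) (simp_all add: row_scale_def)

lemma cls_row_scale_subset: "c dvd 1 \<Longrightarrow> cls (row_scale c u) \<subseteq> cls u"
  by (auto simp: cls_eq_image_row_scale row_scale_row_scale dvd_one_mult)

lemma cls_row_scale: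
  assumes "c dvd 1"
  shows "cls (row_scale c u) = cls u"
proof
  from assms obtain d where cd: "c * d = 1"
    by (metis dvdE)
  then have "d dvd 1"
    by (metis dvd_triv_right)
  moreover have "row_scale d (row_scale c u) = u"
    using cd by (simp add: row_scale_row_scale mult.commute[of d c])
  ultimately show "cls u \<subseteq> cls (row_scale c u)"
    by (metis cls_row_scale_subset)
qed (rule cls_row_scale_subset[OF assms])

lemma cls_eq_iff: "cls u = cls v \<longleftrightarrow> (\<exists>c. c dvd 1 \<and> v = row_scale c u)"
proof
  assume "cls u = cls v"
  then show "\<exists>c. c dvd 1 \<and> v = row_scale c u"
    using mem_cls_self[of v] by (auto simp: cls_eq_image_row_scale)
qed (auto simp: cls_row_scale)

lemma adj_cls_imp_det2_unit:
  assumes "adj (cls u) (cls v)"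
  shows "det2 (u, v) dvd 1"
proof -
  from assms obtain u' v' where "cls u' = cls u" "cls v' = cls v" "det2 (u', v') dvd 1"
    by (auto simp: adj_def GL2_def)
  then obtain c d where "c dvd 1" "d dvd 1" "det2 (u', v') dvd 1"
    and "u = row_scale c u'" "v = row_scale d v'"
    by (auto simp: cls_eq_iff)
  then show ?thesis
    by (simp add: det2_row_scale dvd_one_mult)
qed

lemma cact_standard_clique:
  "cact (v_inf, v_zero, v_one) ((a, b), (c, d)) = (cls (a, b), cls (c, d), cls (a + c, b + d))"
  by (simp add: cact_def v_inf_def v_zero_def v_one_def vact_cls row_mult_def)

lemma det2_cramer:
  "det2 (u, v) * fst w = det2 (u, w) * fst v - det2 (v, w) * fst u"
  "det2 (u, v) * snd w = det2 (u, w) * snd v - det2 (v, w) * snd u"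
  by (simp_all add: det2_def algebra_simps)

lemma standard_clique_orbit:
  assumes "T \<in> cliques3"
  shows "\<exists>M\<in>GL2. cact (v_inf, v_zero, v_one) M = T"
proof -
  from assms obtain u v w :: "'a row" where T: "T = (cls u, cls v, cls w)"
    and "adj (cls u) (cls v)" "adj (cls v) (cls w)" "adj (cls u) (cls w)"
    by (auto simp: cliques3_def vertices_def)
  then have units: "det2 (u, v) dvd 1" "det2 (v, w) dvd 1" "det2 (u, w) dvd 1"
    by (simp_all add: adj_cls_imp_det2_unit)
  then obtain e where e: "det2 (u, v) * e = 1"
    by auto
  then have "e dvd 1"
    by (metis dvd_triv_right)
  define \<alpha> where "\<alpha> = - det2 (v, w) * e"
  define \<beta> where "\<beta> = det2 (u, w) * e"
  have \<alpha>\<beta>: "\<alpha> dvd 1" "\<beta> dvd 1"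
    using units \<open>e dvd 1\<close> by (simp_all add: \<alpha>_def \<beta>_def dvd_one_mult)
  have cancel_e: "e * (det2 (u, v) * x) = x" for x
  proof -
    have "e * (det2 (u, v) * x) = (det2 (u, v) * e) * x"
      by (simp only: ac_simps)
    then show ?thesis
      using e by simp
  qed
  have "\<alpha> * fst u + \<beta> * fst v = e * (det2 (u, v) * fst w)"
    "\<alpha> * snd u + \<beta> * snd v = e * (det2 (u, v) * snd w)"
    unfolding det2_cramer[of u v w] by (simp_all add: \<alpha>_def \<beta>_def algebra_simps)
  then have w: "(\<alpha> * fst u + \<beta> * fst v, \<alpha> * snd u + \<beta> * snd v) = w"
    by (simp add: cancel_e)
  define M where "M = (row_scale \<alpha> u, row_scale \<beta> v)"
  have "M \<in> GL2"
    using \<alpha>\<beta> units by (simp add: M_def GL2_def det2_row_scale dvd_one_mult)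
  moreover have "cact (v_inf, v_zero, v_one) M = (cls (row_scale \<alpha> u), cls (row_scale \<beta> v), cls w)"
    by (simp add: M_def row_scale_def cact_standard_clique w)
  moreover have "\<dots> = T"
    by (simp add: T cls_row_scale \<alpha>\<beta>)
  ultimately show ?thesis by blast
qed

lemma standard_clique_stabilizer:
  "{M \<in> GL2. cact (v_inf, v_zero, v_one) M = (v_inf, v_zero, v_one)} = scalar_mats"
proof (intro set_eqI iffI)
  fix M :: "'a mat2"
  assume "M \<in> {M \<in> GL2. cact (v_inf, v_zero, v_one) M = (v_inf, v_zero, v_one)}"
  moreover obtain a b c d where M: "M = ((a, b), (c, d))"
    by (metis prod.collapse)
  ultimately have "a * d - b * c dvd 1"
    and "cact (v_inf, v_zero, v_one) ((a, b), (c, d)) = (v_inf, v_zero, v_one)"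
    by (simp_all add: GL2_def det2_def)
  then have "cls (1, 0) = cls (a, b)" "cls (0, 1) = cls (c, d)" "cls (1, 1) = cls (a + c, b + d)"
    and "a * d - b * c dvd 1"
    unfolding cact_standard_clique by (simp_all add: v_inf_def v_zero_def v_one_def)
  then have "b = 0" "c = 0" "a = d" "a * a dvd 1"
    by (auto simp: cls_eq_iff row_scale_def)
  then show "M \<in> scalar_mats"
    by (auto simp: scalar_mats_def M dest: dvd_mult_left)
next
  fix M :: "'a mat2"
  assume "M \<in> scalar_mats"
  then obtain a where a: "a dvd 1" and M: "M = ((a, 0), (0, a))"
    by (auto simp: scalar_mats_def)
  have "cact (v_inf, v_zero, v_one) M
      = (cls (row_scale a (1, 0)), cls (row_scale a (0, 1)), cls (row_scale a (1, 1)))"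
    by (simp add: M cact_standard_clique row_scale_def)
  with a show "M \<in> {M \<in> GL2. cact (v_inf, v_zero, v_one) M = (v_inf, v_zero, v_one)}"
    by (simp add: M GL2_def det2_def dvd_one_mult cls_row_scale v_inf_def v_zero_def v_one_def)
qed

theorem lemma2p7:
  shows "(\<forall>T \<in> (cliques3 :: ('a::comm_ring_1 row set \<times> 'a row set \<times> 'a row set) set).
            \<forall>T' \<in> cliques3. \<exists>M \<in> GL2. cact T M = T')
         \<and> {M \<in> (GL2 :: 'a mat2 set). cact (v_inf, v_zero, v_one) M = (v_inf, v_zero, v_one)}
             = scalar_mats"
proof (intro conjI ballI standard_clique_stabilizer)
  fix T T' :: "'a row set \<times> 'a row set \<times> 'a row set"
  assume "T \<in> cliques3" "T' \<in> cliques3"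
  then obtain M M' where "M \<in> GL2" "cact (v_inf, v_zero, v_one) M = T"
    and "M' \<in> GL2" "cact (v_inf, v_zero, v_one) M' = T'"
    by (meson standard_clique_orbit)
  moreover obtain N where "N \<in> GL2" "mat_mult M N = mat_one"
    using GL2_right_inverse \<open>M \<in> GL2\<close> by blast
  ultimately have "cact T (mat_mult N M') = T'" and "mat_mult N M' \<in> GL2"
    by (metis cact_mat_mult cact_mat_one, simp add: GL2_mat_mult)
  then show "\<exists>M\<in>GL2. cact T M = T'"
    by blast
qed

end
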